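(* Let $X$ be a transient random walk on $\mathbf{Z}^d$ and let $U(A):=\sum_{x\in A\cap\mathbf{Z}^d}g(0,x)$ for $A\subseteq\mathbf{R}^d$. Then $U(\mathcal{V}_{n+1})\le 4^dU(\mathcal{V}_n)$ for all integers $n\ge0$.
   Context: A random walk on $\mathbf{Z}^d$ is $X_n=X_0+\xi_1+\cdots+\xi_n$ with $\xi_1,\xi_2,\dots$ i.i.d. $\mathbf{Z}^d$-valued; $P^a$ denotes its law when $X_0=a$. Its Green function is $g(a,x):=\sum_{n\ge0}P^a\{X_n=x\}$, and transience means $g$ is finite. For $k\ge0$, $\mathcal{V}_k:=[-2^k,2^k)^d$. *)

theory Defs
  imports "HOL-Analysis.Analysis" "HOL-Probability.Probability"
begin

text \<open>Z^d is modelled as int ^ 'd for a finite index type 'd (d = CARD('d)).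
  The step distribution (law of xi_1) is a pmf mu on int ^ 'd.
  rw_law mu a n is the law of X_n = a + xi_1 + ... + xi_n under P^a.\<close>

fun rw_law :: "(int ^ 'd) pmf \<Rightarrow> int ^ 'd \<Rightarrow> nat \<Rightarrow> (int ^ 'd) pmf" where
  "rw_law \<mu> a 0 = return_pmf a"
| "rw_law \<mu> a (Suc n) = bind_pmf (rw_law \<mu> a n) (\<lambda>y. map_pmf (\<lambda>s. y + s) \<mu>)"

definition green :: "(int ^ 'd) pmf \<Rightarrow> int ^ 'd \<Rightarrow> int ^ 'd \<Rightarrow> ennreal" where
  "green \<mu> a x = (\<Sum>n. ennreal (pmf (rw_law \<mu> a n) x))"

definition transient :: "(int ^ 'd) pmf \<Rightarrow> bool" where
  "transient \<mu> \<longleftrightarrow> (\<forall>a x. green \<mu> a x < \<infinity>)"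

definition box_V :: "nat \<Rightarrow> (int ^ 'd) set" where
  "box_V k = {x. \<forall>i. - (2 ^ k) \<le> x $ i \<and> x $ i < 2 ^ k}"

definition U_pot :: "(int ^ 'd) pmf \<Rightarrow> (int ^ 'd) set \<Rightarrow> ennreal" where
  "U_pot \<mu> A = (\<Sum>x\<in>A. green \<mu> 0 x)"

end

theory Submission
  imports Defs
begin

text \<open>Split V_(n+1) into the 4^d blocks of side 2^n given by the quotients of the coordinates
  by 2^n. Any two points of a block differ by a point of V_n, so it suffices to show that
  U(Q) \<le> max_(b \<in> Q) U(Q - b) for every finite Q. This maximum principle follows from the
  first-entrance decomposition: a visit of the walk to Q happens after its first entrance into
  Q at some site b, from where the expected number of visits to Q is U(Q - b), and the walk
  enters Q at most once. Everything is computed in [0, \<infinity>].\<close>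

lemma nn_integral_count_space_add_right:
  fixes c :: "'a::group_add"
  shows "(\<integral>\<^sup>+ y. f (y + c) \<partial>count_space UNIV) = (\<integral>\<^sup>+ y. f y \<partial>count_space UNIV)"
  by (rule nn_integral_bij_count_space, rule bij_betwI[where g = "\<lambda>y. y - c"]) auto

lemma pmf_map_add_left:
  fixes y :: "'a::group_add"
  shows "pmf (map_pmf (\<lambda>s. y + s) \<mu>) x = pmf \<mu> (- y + x)"
  using pmf_map_inj'[of "\<lambda>s. y + s" \<mu> "- y + x"] by (simp add: inj_def add.assoc[symmetric])

lemma nn_integral_pmf_diff_eq_1:
  fixes y :: "'a::ab_group_add"
  shows "(\<integral>\<^sup>+ x. ennreal (pmf \<mu> (x - y)) \<partial>count_space UNIV) = 1"
  using nn_integral_count_space_add_right[of "\<lambda>x. ennreal (pmf \<mu> (x - y))" y]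
  by (simp add: nn_integral_pmf_eq_1)

definition rw_dens :: "(int ^ 'd) pmf \<Rightarrow> nat \<Rightarrow> int ^ 'd \<Rightarrow> ennreal" where
  "rw_dens \<mu> n x = ennreal (pmf (rw_law \<mu> 0 n) x)"

lemma rw_dens_0: "rw_dens \<mu> 0 x = indicator {0} x"
  by (simp add: rw_dens_def indicator_def)

lemma rw_dens_Suc:
  "rw_dens \<mu> (Suc n) x = (\<integral>\<^sup>+ y. rw_dens \<mu> n y * ennreal (pmf \<mu> (x - y)) \<partial>count_space UNIV)"
  unfolding rw_dens_def rw_law.simps ennreal_pmf_bind pmf_map_add_left nn_integral_measure_pmf
  by simp

lemma green_0_eq_suminf_rw_dens: "green \<mu> 0 x = (\<Sum>n. rw_dens \<mu> n x)"
  by (simp add: green_def rw_dens_def)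

lemma nn_integral_rw_dens_0:
  "(\<integral>\<^sup>+ b. f b * rw_dens \<mu> 0 (x - b) \<partial>count_space UNIV) = f x"
proof -
  have "rw_dens \<mu> 0 (x - b) = indicator {x} b" for b
    by (simp add: rw_dens_0 indicator_def)
  then show ?thesis
    by simp
qed

lemma rw_dens_mixture_Suc:
  "(\<integral>\<^sup>+ y. (\<integral>\<^sup>+ b. w b * rw_dens \<mu> m (y - b) \<partial>count_space UNIV) * ennreal (pmf \<mu> (x - y))
      \<partial>count_space UNIV)
   = (\<integral>\<^sup>+ b. w b * rw_dens \<mu> (Suc m) (x - b) \<partial>count_space UNIV)"
proof -
  have shift: "(\<integral>\<^sup>+ y. rw_dens \<mu> m (y - b) * ennreal (pmf \<mu> (x - y)) \<partial>count_space UNIV)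
      = rw_dens \<mu> (Suc m) (x - b)" for b
    using nn_integral_count_space_add_right
        [of "\<lambda>y. rw_dens \<mu> m (y - b) * ennreal (pmf \<mu> (x - y))" b]
    by (simp add: rw_dens_Suc algebra_simps)
  have "(\<integral>\<^sup>+ y. (\<integral>\<^sup>+ b. w b * rw_dens \<mu> m (y - b) \<partial>count_space UNIV) * ennreal (pmf \<mu> (x - y))
      \<partial>count_space UNIV)
      = (\<integral>\<^sup>+ y. \<integral>\<^sup>+ b. w b * (rw_dens \<mu> m (y - b) * ennreal (pmf \<mu> (x - y)))
          \<partial>count_space UNIV \<partial>count_space UNIV)"
    by (simp add: nn_integral_multc[symmetric] mult.assoc)
  also have "\<dots> = (\<integral>\<^sup>+ b. \<integral>\<^sup>+ y. w b * (rw_dens \<mu> m (y - b) * ennreal (pmf \<mu> (x - y)))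
          \<partial>count_space UNIV \<partial>count_space UNIV)"
    by (rule nn_integral_count_space_nn_integral) auto
  also have "\<dots> = (\<integral>\<^sup>+ b. w b * rw_dens \<mu> (Suc m) (x - b) \<partial>count_space UNIV)"
    by (simp add: nn_integral_cmult shift)
  finally show ?thesis .
qed

text \<open>The taboo density: the probability that the walk started at 0 is at x at time k
  without having visited Q at the times 0, ..., k - 1.\<close>

fun taboo_dens :: "(int ^ 'd) pmf \<Rightarrow> (int ^ 'd) set \<Rightarrow> nat \<Rightarrow> int ^ 'd \<Rightarrow> ennreal" where
  "taboo_dens \<mu> Q 0 x = indicator {0} x"
| "taboo_dens \<mu> Q (Suc k) x =
     (\<integral>\<^sup>+ y. taboo_dens \<mu> Q k y * indicator (- Q) y * ennreal (pmf \<mu> (x - y)) \<partial>count_space UNIV)"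

declare taboo_dens.simps(2) [simp del]

lemma rw_dens_first_entrance:
  "rw_dens \<mu> n x = taboo_dens \<mu> Q n x * indicator (- Q) x
     + (\<Sum>k\<le>n. \<integral>\<^sup>+ b. taboo_dens \<mu> Q k b * indicator Q b * rw_dens \<mu> (n - k) (x - b)
         \<partial>count_space UNIV)"
proof (induction n arbitrary: x)
  case 0
  show ?case
    using nn_integral_rw_dens_0[of "\<lambda>b. indicator {0} b * indicator Q b"]
    by (simp add: rw_dens_0 indicator_def)
next
  case (Suc n)
  define E where "E k y = (\<integral>\<^sup>+ b. taboo_dens \<mu> Q k b * indicator Q b * rw_dens \<mu> (n - k) (y - b)
      \<partial>count_space UNIV)" for k y
  have "rw_dens \<mu> (Suc n) x = (\<integral>\<^sup>+ y. (taboo_dens \<mu> Q n y * indicator (- Q) y + (\<Sum>k\<le>n. E k y))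
      * ennreal (pmf \<mu> (x - y)) \<partial>count_space UNIV)"
    unfolding rw_dens_Suc E_def using Suc.IH by simp
  also have "\<dots> = taboo_dens \<mu> Q (Suc n) x
      + (\<Sum>k\<le>n. \<integral>\<^sup>+ y. E k y * ennreal (pmf \<mu> (x - y)) \<partial>count_space UNIV)"
    by (simp add: taboo_dens.simps distrib_right sum_distrib_right nn_integral_add nn_integral_sum)
  also have "(\<Sum>k\<le>n. \<integral>\<^sup>+ y. E k y * ennreal (pmf \<mu> (x - y)) \<partial>count_space UNIV)
      = (\<Sum>k\<le>n. \<integral>\<^sup>+ b. taboo_dens \<mu> Q k b * indicator Q b * rw_dens \<mu> (Suc n - k) (x - b)
          \<partial>count_space UNIV)"
    unfolding E_def by (intro sum.cong refl) (simp add: rw_dens_mixture_Suc Suc_diff_le)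
  also have "taboo_dens \<mu> Q (Suc n) x = taboo_dens \<mu> Q (Suc n) x * indicator (- Q) x
      + (\<integral>\<^sup>+ b. taboo_dens \<mu> Q (Suc n) b * indicator Q b * rw_dens \<mu> (Suc n - Suc n) (x - b)
          \<partial>count_space UNIV)"
    using nn_integral_rw_dens_0[of "\<lambda>b. taboo_dens \<mu> Q (Suc n) b * indicator Q b"]
    by (simp add: indicator_def)
  finally show ?case by (simp add: add_ac)
qed

lemma taboo_mass_Suc:
  "(\<integral>\<^sup>+ x. taboo_dens \<mu> Q (Suc k) x \<partial>count_space UNIV)
   = (\<integral>\<^sup>+ y. taboo_dens \<mu> Q k y * indicator (- Q) y \<partial>count_space UNIV)"
proof -
  have "(\<integral>\<^sup>+ x. taboo_dens \<mu> Q (Suc k) x \<partial>count_space UNIV)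
      = (\<integral>\<^sup>+ y. \<integral>\<^sup>+ x. taboo_dens \<mu> Q k y * indicator (- Q) y * ennreal (pmf \<mu> (x - y))
          \<partial>count_space UNIV \<partial>count_space UNIV)"
    unfolding taboo_dens.simps by (rule nn_integral_count_space_nn_integral) auto
  also have "\<dots> = (\<integral>\<^sup>+ y. taboo_dens \<mu> Q k y * indicator (- Q) y \<partial>count_space UNIV)"
    by (simp add: nn_integral_cmult nn_integral_pmf_diff_eq_1)
  finally show ?thesis .
qed

lemma entrance_mass_add_taboo_mass:
  "(\<Sum>k<N. \<integral>\<^sup>+ x. taboo_dens \<mu> Q k x * indicator Q x \<partial>count_space UNIV)
     + (\<integral>\<^sup>+ x. taboo_dens \<mu> Q N x \<partial>count_space UNIV) = 1"
proof (induction N)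
  case 0
  show ?case
    by simp
next
  case (Suc N)
  have "(\<integral>\<^sup>+ x. taboo_dens \<mu> Q N x \<partial>count_space UNIV)
      = (\<integral>\<^sup>+ x. taboo_dens \<mu> Q N x * indicator Q x + taboo_dens \<mu> Q N x * indicator (- Q) x
          \<partial>count_space UNIV)"
    by (intro nn_integral_cong) (simp add: indicator_def)
  also have "\<dots> = (\<integral>\<^sup>+ x. taboo_dens \<mu> Q N x * indicator Q x \<partial>count_space UNIV)
      + (\<integral>\<^sup>+ x. taboo_dens \<mu> Q (Suc N) x \<partial>count_space UNIV)"
    by (simp add: nn_integral_add taboo_mass_Suc)
  finally show ?case
    using Suc.IH by (simp add: add.assoc)
qed

lemma entrance_mass_le_1:
  "(\<Sum>k<N. \<integral>\<^sup>+ x. taboo_dens \<mu> Q k x * indicator Q x \<partial>count_space UNIV) \<le> 1"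
  using add_increasing2[OF zero_le order_refl] entrance_mass_add_taboo_mass[of \<mu> Q N]
  by (rule ord_le_eq_trans)

lemma partial_sum_rw_dens_le_entrance_sums:
  assumes "x \<in> Q"
  shows "(\<Sum>n<N. rw_dens \<mu> n x)
    \<le> (\<Sum>k<N. \<Sum>m<N. \<integral>\<^sup>+ b. taboo_dens \<mu> Q k b * indicator Q b * rw_dens \<mu> m (x - b)
          \<partial>count_space UNIV)"
proof -
  define f where "f k m = (\<integral>\<^sup>+ b. taboo_dens \<mu> Q k b * indicator Q b * rw_dens \<mu> m (x - b)
      \<partial>count_space UNIV)" for k m
  have "(\<Sum>n<N. rw_dens \<mu> n x) = (\<Sum>n<N. \<Sum>k\<le>n. f k (n - k))"
    using rw_dens_first_entrance[of \<mu> _ x Q] assms by (simp add: f_def)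
  also have "\<dots> = (\<Sum>(k, m)\<in>{(k, m). k + m < N}. f k m)"
    by (rule sum.triangle_reindex[symmetric])
  also have "\<dots> \<le> (\<Sum>(k, m)\<in>{..<N} \<times> {..<N}. f k m)"
    by (rule sum_mono2) auto
  also have "\<dots> = (\<Sum>k<N. \<Sum>m<N. f k m)"
    by (rule sum.cartesian_product[symmetric])
  finally show ?thesis
    by (simp add: f_def)
qed

lemma sum_green_le_if_shifted_sums_le:
  fixes \<mu> :: "(int ^ 'd) pmf"
  assumes "finite Q" and shifted: "\<And>b. b \<in> Q \<Longrightarrow> (\<Sum>x\<in>Q. green \<mu> 0 (x - b)) \<le> V"
  shows "(\<Sum>x\<in>Q. green \<mu> 0 x) \<le> V"
proof -
  have partial: "(\<Sum>x\<in>Q. \<Sum>n<N. rw_dens \<mu> n x) \<le> V" for N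
  proof -
    have visits_from: "indicator Q b * (\<Sum>x\<in>Q. \<Sum>m<N. rw_dens \<mu> m (x - b)) \<le> indicator Q b * V" for b
    proof (cases "b \<in> Q")
      case True
      have "(\<Sum>x\<in>Q. \<Sum>m<N. rw_dens \<mu> m (x - b)) \<le> (\<Sum>x\<in>Q. green \<mu> 0 (x - b))"
        unfolding green_0_eq_suminf_rw_dens by (intro sum_mono sum_le_suminf) auto
      then show ?thesis
        using order_trans[OF _ shifted[OF True]] True by simp
    qed simp
    have "(\<Sum>x\<in>Q. \<Sum>n<N. rw_dens \<mu> n x)
        \<le> (\<Sum>x\<in>Q. \<Sum>k<N. \<Sum>m<N. \<integral>\<^sup>+ b. taboo_dens \<mu> Q k b * indicator Q b * rw_dens \<mu> m (x - b)
              \<partial>count_space UNIV)"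
      by (intro sum_mono partial_sum_rw_dens_le_entrance_sums)
    also have "\<dots> = (\<Sum>k<N. \<Sum>x\<in>Q. \<Sum>m<N. \<integral>\<^sup>+ b. taboo_dens \<mu> Q k b * indicator Q b
        * rw_dens \<mu> m (x - b) \<partial>count_space UNIV)"
      by (rule sum.swap)
    also have "\<dots> = (\<Sum>k<N. \<integral>\<^sup>+ b. taboo_dens \<mu> Q k b * indicator Q b
        * (\<Sum>x\<in>Q. \<Sum>m<N. rw_dens \<mu> m (x - b)) \<partial>count_space UNIV)"
      unfolding sum_distrib_left by (simp only: nn_integral_sum borel_measurable_count_space)
    also have "\<dots> \<le> (\<Sum>k<N. \<integral>\<^sup>+ b. taboo_dens \<mu> Q k b * indicator Q b * V \<partial>count_space UNIV)"
      unfolding mult.assoc by (intro sum_mono nn_integral_mono mult_left_mono visits_from) simp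
    also have "\<dots> = (\<Sum>k<N. \<integral>\<^sup>+ b. taboo_dens \<mu> Q k b * indicator Q b \<partial>count_space UNIV) * V"
      by (simp add: nn_integral_multc sum_distrib_right)
    also have "\<dots> \<le> 1 * V"
      by (intro mult_right_mono entrance_mass_le_1) simp
    finally show ?thesis
      by simp
  qed
  have "(\<Sum>x\<in>Q. green \<mu> 0 x) = (\<Sum>n. \<Sum>x\<in>Q. rw_dens \<mu> n x)"
    unfolding green_0_eq_suminf_rw_dens by (rule suminf_sum[symmetric]) auto
  also have "\<dots> \<le> V"
    using partial by (intro suminf_le_const) (auto simp: sum.swap[of _ Q])
  finally show ?thesis .
qed

lemma div_bounds_int:
  fixes x s a b :: int
  assumes "0 < s" "a * s \<le> x" "x < b * s"
  shows "a \<le> x div s" "x div s < b"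
proof -
  show "a \<le> x div s"
    using zdiv_mono1[OF assms(2,1)] assms(1) by simp
  show "x div s < b"
  proof (rule ccontr)
    assume "\<not> x div s < b"
    then have "b * s \<le> x div s * s"
      using assms(1) by (simp add: mult_right_mono)
    also have "\<dots> \<le> x"
      using assms(1) div_mult_mod_eq[of x s] pos_mod_sign[OF assms(1), of x] by linarith
    finally show False
      using assms(3) by simp
  qed
qed

lemma abs_diff_less_if_div_eq:
  fixes x y s :: int
  assumes "0 < s" "x div s = y div s"
  shows "\<bar>x - y\<bar> < s"
proof -
  have "x = s * (y div s) + x mod s" "y = s * (y div s) + y mod s"
    using assms(2) by (metis mult_div_mod_eq)+
  moreover have "0 \<le> x mod s" "x mod s < s" "0 \<le> y mod s" "y mod s < s"
    using assms(1) by simp_all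
  ultimately show ?thesis
    by linarith
qed

lemma card_vec_all_in:
  fixes S :: "'a set"
  assumes "finite S"
  shows "finite {x :: 'a ^ 'd. \<forall>i. x $ i \<in> S}"
    and "card {x :: 'a ^ 'd. \<forall>i. x $ i \<in> S} = card S ^ CARD('d)"
proof -
  have bij: "bij_betw vec_nth {x :: 'a ^ 'd. \<forall>i. x $ i \<in> S} (PiE UNIV (\<lambda>_. S))"
    by (rule bij_betwI[where g = vec_lambda]) (auto simp: PiE_iff)
  show "finite {x :: 'a ^ 'd. \<forall>i. x $ i \<in> S}"
    using bij_betw_finite[OF bij] assms by (simp add: finite_PiE)
  show "card {x :: 'a ^ 'd. \<forall>i. x $ i \<in> S} = card S ^ CARD('d)"
    using bij_betw_same_card[OF bij] by (simp add: card_PiE)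
qed

lemma finite_box_V: "finite (box_V k :: (int ^ 'd) set)"
  using card_vec_all_in(1)[of "{- (2 ^ k) ..< 2 ^ k :: int}"] by (simp add: box_V_def)

definition block :: "nat \<Rightarrow> int ^ 'd \<Rightarrow> int ^ 'd" where
  "block n x = (\<chi> i. x $ i div 2 ^ n)"

lemma diff_in_box_V_if_block_eq:
  assumes "block n x = block n y"
  shows "x - y \<in> box_V n"
proof -
  have "- (2 ^ n) \<le> x $ i - y $ i \<and> x $ i - y $ i < 2 ^ n" for i
  proof -
    have "x $ i div 2 ^ n = y $ i div 2 ^ n"
      using assms by (metis block_def vec_lambda_beta)
    then have "\<bar>x $ i - y $ i\<bar> < 2 ^ n"
      by (intro abs_diff_less_if_div_eq) simp_all
    then show ?thesis
      by linarith
  qed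
  then show ?thesis
    by (simp add: box_V_def)
qed

lemma card_block_image_box_V_Suc: "card (block n ` box_V (Suc n) :: (int ^ 'd) set) \<le> 4 ^ CARD('d)"
proof -
  have "block n ` box_V (Suc n) \<subseteq> {j :: int ^ 'd. \<forall>i. j $ i \<in> {-2..<2}}"
  proof clarify
    fix x :: "int ^ 'd" and i
    assume "x \<in> box_V (Suc n)"
    then have "- 2 * 2 ^ n \<le> x $ i" "x $ i < 2 * 2 ^ n"
      by (auto simp: box_V_def)
    then show "block n x $ i \<in> {-2..<2}"
      using div_bounds_int[of "2 ^ n" "- 2" "x $ i" 2] by (simp add: block_def)
  qed
  from card_mono[OF card_vec_all_in(1) this] show ?thesis
    using card_vec_all_in(2)[of "{-2..<2 :: int}", where 'd = 'd] by simp
qed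

lemma sum_green_le_U_pot_if_diffs_in:
  fixes \<mu> :: "(int ^ 'd) pmf"
  assumes "finite A" "finite B" and diffs: "\<And>x b. x \<in> A \<Longrightarrow> b \<in> A \<Longrightarrow> x - b \<in> B"
  shows "(\<Sum>x\<in>A. green \<mu> 0 x) \<le> U_pot \<mu> B"
proof (rule sum_green_le_if_shifted_sums_le[OF \<open>finite A\<close>])
  fix b assume "b \<in> A"
  have "(\<Sum>x\<in>A. green \<mu> 0 (x - b)) = (\<Sum>y\<in>(\<lambda>x. x - b) ` A. green \<mu> 0 y)"
    by (simp add: sum.reindex inj_on_def)
  also have "\<dots> \<le> U_pot \<mu> B"
    unfolding U_pot_def using \<open>b \<in> A\<close> diffs by (intro sum_mono2 \<open>finite B\<close>) auto
  finally show "(\<Sum>x\<in>A. green \<mu> 0 (x - b)) \<le> U_pot \<mu> B" .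
qed

theorem proposition6p2:
  fixes \<mu> :: "(int ^ 'd) pmf" and n :: nat
  assumes "transient \<mu>"
  shows "U_pot \<mu> (box_V (Suc n)) \<le> 4 ^ CARD('d) * U_pot \<mu> (box_V n)"
proof -
  let ?W = "box_V (Suc n) :: (int ^ 'd) set"
  have "U_pot \<mu> ?W = (\<Sum>j\<in>block n ` ?W. \<Sum>x\<in>{x\<in>?W. block n x = j}. green \<mu> 0 x)"
    unfolding U_pot_def by (rule sum.image_gen[OF finite_box_V])
  also have "\<dots> \<le> of_nat (card (block n ` ?W)) * U_pot \<mu> (box_V n)"
    by (intro sum_bounded_above sum_green_le_U_pot_if_diffs_in finite_box_V)
      (auto intro: diff_in_box_V_if_block_eq finite_subset[OF _ finite_box_V])
  also have "\<dots> \<le> of_nat (4 ^ CARD('d)) * U_pot \<mu> (box_V n)"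
    using card_block_image_box_V_Suc[of n, where 'd = 'd] by (intro mult_right_mono of_nat_mono) simp_all
  finally show ?thesis
    by simp
qed

end
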